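(* Let $p$ be an odd prime, $\ell$ an integer not divisible by $p$, $a$ the remainder of $\ell$ modulo $p$ and $a_0=\lfloor\ell/p\rfloor$. Let $\nu_i=\lfloor\frac{a+i\ell}{p}\rfloor$ and $n_i=\min_{0\le j\le p-1-i}(\nu_{i+j}-\nu_j)$ for $0\le i\le p-1$. Then for every $0\le i\le p-1$, $$n_i=ia_0+\Big\lfloor i\frac{a}{p}\Big\rfloor+\epsilon_i,$$ where $\epsilon_i=1$ if $p-i\in E$ and $\epsilon_i=0$ otherwise.
   Context: For a real number $x$, $\operatorname{frac}(x)=x-\lfloor x\rfloor$. The set $E$ is defined as $E=\{h\in\mathbb{Z}: 1\le h<p,\ \text{and for all integers } 1\le h'<h,\ \operatorname{frac}(h'a/p)>\operatorname{frac}(ha/p)\}$. *)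

theory Defs
  imports "HOL-Number_Theory.Number_Theory"
begin

definition frac_part :: "real \<Rightarrow> real" where
  "frac_part x = x - of_int \<lfloor>x\<rfloor>"

definition E_set :: "int \<Rightarrow> int \<Rightarrow> int set" where
  "E_set p a = {h. 1 \<le> h \<and> h < p \<and>
     (\<forall>h'. 1 \<le> h' \<and> h' < h \<longrightarrow>
        frac_part (of_int (h' * a) / of_int p) > frac_part (of_int (h * a) / of_int p))}"

definition nu :: "int \<Rightarrow> int \<Rightarrow> int \<Rightarrow> nat \<Rightarrow> int" where
  "nu p l a i = \<lfloor>(of_int a + of_nat i * of_int l) / (of_int p :: real)\<rfloor>"

definition n_min :: "int \<Rightarrow> int \<Rightarrow> int \<Rightarrow> nat \<Rightarrow> int" where
  "n_min p l a i = Min ((\<lambda>j. nu p l a (i + j) - nu p l a j) ` {0 .. nat p - 1 - i})"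

end

theory Submission
  imports Defs
begin

text \<open>Since \<open>l = p * (l div p) + a\<close>, one has \<open>\<nu>\<^sub>k = k * (l div p) + ((k + 1) * a) div p\<close>, so
  \<open>\<nu>\<^sub>i\<^sub>+\<^sub>j - \<nu>\<^sub>j\<close> is \<open>i * (l div p) + (i * a) div p\<close> plus the carry of adding the residues of
  \<open>(j + 1) * a\<close> and \<open>i * a\<close>. As the residues of \<open>i * a\<close> and \<open>(p - i) * a\<close> add up to \<open>p\<close>, the
  carry is \<open>1\<close> exactly when the residue of \<open>(j + 1) * a\<close> is at least that of \<open>(p - i) * a\<close>.
  Hence the minimum over \<open>j\<close> carries a \<open>1\<close> iff the residue of \<open>(p - i) * a\<close> is the least
  among those of \<open>h * a\<close>, \<open>1 \<le> h \<le> p - i\<close>, which (the residues being distinct) means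
  \<open>p - i \<in> E\<close>.\<close>

lemma frac_part_of_int_divide:
  assumes "(p::int) > 0"
  shows "frac_part (of_int x / of_int p) = of_int (x mod p) / of_int p"
proof -
  have "(of_int x::real) = of_int p * of_int (x div p) + of_int (x mod p)"
    by (metis div_mult_mod_eq of_int_add of_int_mult mult.commute)
  then show ?thesis
    unfolding frac_part_def floor_divide_of_int_eq using assms by (simp add: field_simps)
qed

lemma E_set_iff_mod:
  assumes "(p::int) > 0"
  shows "h \<in> E_set p a \<longleftrightarrow> 1 \<le> h \<and> h < p \<and>
     (\<forall>h'. 1 \<le> h' \<and> h' < h \<longrightarrow> (h * a) mod p < (h' * a) mod p)"
proof -
  have "frac_part (of_int x / of_int p) < frac_part (of_int y / of_int p) \<longleftrightarrow> x mod p < y mod p"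
    for x y
    using assms by (simp add: frac_part_of_int_divide divide_less_cancel)
  then show ?thesis unfolding E_set_def mem_Collect_eq by blast
qed

lemma prime_not_dvd_small_mult:
  fixes p :: int
  assumes "prime p" "\<not> p dvd a" "0 < k" "k < p"
  shows "\<not> p dvd k * a"
proof
  assume "p dvd k * a"
  then have "p dvd k" using assms(1,2) prime_dvd_mult_iff by blast
  then show False using zdvd_imp_le[of p k] assms(3,4) by simp
qed

lemma E_set_iff_min_residue:
  fixes p :: int
  assumes "prime p" "\<not> p dvd a" "1 \<le> h" "h < p"
  shows "h \<in> E_set p a \<longleftrightarrow> (\<forall>h'\<in>{1..h}. (h * a) mod p \<le> (h' * a) mod p)"
proof -
  have distinct: "(h' * a) mod p \<noteq> (h * a) mod p" if "1 \<le> h'" "h' < h" for h'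
  proof
    assume "(h' * a) mod p = (h * a) mod p"
    then have "p dvd (h - h') * a" by (metis mod_eq_dvd_iff left_diff_distrib)
    then show False using prime_not_dvd_small_mult[OF assms(1,2), of "h - h'"] that assms(4) by simp
  qed
  have "h \<in> E_set p a \<longleftrightarrow> (\<forall>h'. 1 \<le> h' \<and> h' < h \<longrightarrow> (h * a) mod p < (h' * a) mod p)"
    using assms(3,4) prime_gt_0_int[OF assms(1)] by (simp add: E_set_iff_mod)
  also have "\<dots> \<longleftrightarrow> (\<forall>h'\<in>{1..h}. (h * a) mod p \<le> (h' * a) mod p)"
  proof safe
    fix h' assume "\<forall>h'. 1 \<le> h' \<and> h' < h \<longrightarrow> (h * a) mod p < (h' * a) mod p" "h' \<in> {1..h}"
    then show "(h * a) mod p \<le> (h' * a) mod p" by (cases "h' = h") auto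
  next
    fix h' assume "\<forall>h'\<in>{1..h}. (h * a) mod p \<le> (h' * a) mod p" "1 \<le> h'" "h' < h"
    then show "(h * a) mod p < (h' * a) mod p" using distinct[of h'] by force
  qed
  finally show ?thesis .
qed

lemma div_add_carry:
  fixes p :: int
  assumes "p > 0"
  shows "(x + y) div p = x div p + y div p + (if p \<le> x mod p + y mod p then 1 else 0)"
proof -
  have bounds: "0 \<le> x mod p" "x mod p < p" "0 \<le> y mod p" "y mod p < p" using assms by auto
  have "(x mod p + y mod p) div p = (if p \<le> x mod p + y mod p then 1 else 0)"
  proof (cases "p \<le> x mod p + y mod p")
    case True
    have "(x mod p + y mod p - p) div p = 0" by (rule div_pos_pos_trivial) (use True bounds in linarith)+
    then show ?thesis using True div_pos_geq[OF assms True] by simp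
  qed (use bounds in \<open>simp add: div_pos_pos_trivial\<close>)
  then show ?thesis using div_add1_eq[of x y p] by simp
qed

lemma nu_eq:
  fixes p :: int
  assumes "p > 0"
  shows "nu p l (l mod p) k = int k * (l div p) + ((int k + 1) * (l mod p)) div p"
proof -
  have "(of_int (l mod p) + of_nat k * of_int l :: real) = of_int (l mod p + int k * l)" by simp
  then have "nu p l (l mod p) k = (l mod p + int k * l) div p"
    unfolding nu_def by (simp only: floor_divide_of_int_eq)
  also have "l mod p + int k * l = (int k + 1) * (l mod p) + p * (int k * (l div p))"
  proof -
    have "r + int k * l = (int k + 1) * r + p * (int k * q)" if "l = p * q + r" for q r
      using that by (simp add: algebra_simps)
    from this[of "l div p" "l mod p"] show ?thesis by simp
  qed
  finally show ?thesis using assms by simp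
qed

lemma nu_diff:
  fixes p :: int
  assumes "p > 0"
  shows "nu p l (l mod p) (i + j) - nu p l (l mod p) j
    = int i * (l div p) + (int i * (l mod p)) div p
      + (if p \<le> ((int j + 1) * (l mod p)) mod p + (int i * (l mod p)) mod p then 1 else 0)"
proof -
  have split: "(int (i + j) + 1) * (l mod p) = (int j + 1) * (l mod p) + int i * (l mod p)"
    by (simp add: algebra_simps)
  have "int (i + j) * (l div p) = int i * (l div p) + int j * (l div p)"
    by (simp add: distrib_right)
  then show ?thesis
    unfolding nu_eq[OF assms] split div_add_carry[OF assms] by linarith
qed

lemma add_mod_ge_iff_uminus_mod_le:
  fixes p :: int
  assumes "p > 0" "\<not> p dvd x"
  shows "p \<le> y mod p + x mod p \<longleftrightarrow> (- x) mod p \<le> y mod p"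
  using assms by (simp add: zmod_zminus1_eq_if dvd_eq_mod_eq_0) linarith

lemma Min_add_indicator:
  fixes K :: int
  assumes "finite S" "S \<noteq> {}"
  shows "Min ((\<lambda>j. K + (if P j then 1 else 0)) ` S) = K + (if \<forall>j\<in>S. P j then 1 else 0)"
proof (cases "\<forall>j\<in>S. P j")
  case True
  then have "(\<lambda>j. K + (if P j then 1 else 0)) ` S = {K + 1}" using assms(2) by auto
  then show ?thesis using True by simp
next
  case False
  then show ?thesis
    by (intro Min_eqI) (use assms(1) in auto)
qed

lemma nu_diff_eq_residue_le:
  fixes p :: int
  assumes "prime p" "\<not> p dvd l" "0 < i" "int i < p"
  shows "nu p l (l mod p) (i + j) - nu p l (l mod p) j
    = int i * (l div p) + (int i * (l mod p)) div p
      + (if ((p - int i) * (l mod p)) mod p \<le> ((int j + 1) * (l mod p)) mod p then 1 else 0)"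
proof -
  have p0: "p > 0" using prime_gt_0_int[OF assms(1)] .
  have "\<not> p dvd int i * (l mod p)"
    using prime_not_dvd_small_mult[OF assms(1)] assms(2-4) by (simp add: dvd_mod_iff)
  moreover have "(- (int i * (l mod p))) mod p = ((p - int i) * (l mod p)) mod p"
  proof -
    have "(p - int i) * (l mod p) = - (int i * (l mod p)) + (l mod p) * p"
      by (simp add: algebra_simps)
    then show ?thesis by (simp only: mod_mult_self1)
  qed
  ultimately show ?thesis
    using nu_diff[OF p0, of l i j] add_mod_ge_iff_uminus_mod_le[OF p0] by simp
qed

lemma ball_atLeastAtMost_shift_int:
  "(\<forall>j\<in>{0..n}. Q (int j + 1)) \<longleftrightarrow> (\<forall>h\<in>{1..int n + 1}. Q h)"
proof safe
  fix h :: int assume "\<forall>j\<in>{0..n}. Q (int j + 1)" "h \<in> {1..int n + 1}"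
  moreover have "nat (h - 1) \<in> {0..n}" "int (nat (h - 1)) + 1 = h"
    using \<open>h \<in> {1..int n + 1}\<close> by auto
  ultimately show "Q h" by metis
qed auto

lemma n_min_eq_E_set_indicator:
  fixes p :: int
  assumes "prime p" "\<not> p dvd l" "0 < i" "int i < p"
  shows "n_min p l (l mod p) i = int i * (l div p) + (int i * (l mod p)) div p
           + (if p - int i \<in> E_set p (l mod p) then 1 else 0)"
proof -
  let ?a = "l mod p" and ?h = "p - int i"
  have a: "\<not> p dvd ?a" using assms(2) by (simp add: dvd_mod_iff)
  have last: "int (nat p - 1 - i) + 1 = ?h" using assms(4) by linarith
  have "n_min p l ?a i = Min ((\<lambda>j. int i * (l div p) + (int i * ?a) div p
      + (if (?h * ?a) mod p \<le> ((int j + 1) * ?a) mod p then 1 else 0)) ` {0 .. nat p - 1 - i})"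
    unfolding n_min_def nu_diff_eq_residue_le[OF assms] ..
  also have "\<dots> = int i * (l div p) + (int i * ?a) div p
      + (if \<forall>j\<in>{0 .. nat p - 1 - i}. (?h * ?a) mod p \<le> ((int j + 1) * ?a) mod p then 1 else 0)"
    by (rule Min_add_indicator) simp_all
  also have "(\<forall>j\<in>{0 .. nat p - 1 - i}. (?h * ?a) mod p \<le> ((int j + 1) * ?a) mod p)
      \<longleftrightarrow> ?h \<in> E_set p ?a"
    using ball_atLeastAtMost_shift_int[of "nat p - 1 - i" "\<lambda>h. (?h * ?a) mod p \<le> (h * ?a) mod p"]
      E_set_iff_min_residue[OF assms(1) a, of ?h] last assms(3,4) by simp
  finally show ?thesis .
qed

theorem lemma7p1:
  fixes p l :: int and i :: nat
  assumes "prime p" and "odd p" and "\<not> p dvd l"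
    and "i \<le> nat p - 1"
  defines "a \<equiv> l mod p" and "a0 \<equiv> \<lfloor>of_int l / (of_int p :: real)\<rfloor>"
  shows "n_min p l a i = int i * a0 + \<lfloor>of_nat i * of_int a / (of_int p :: real)\<rfloor>
           + (if p - int i \<in> E_set p a then 1 else 0)"
proof -
  have p0: "p > 0" using prime_gt_0_int[OF assms(1)] .
  have "\<lfloor>of_nat i * of_int a / (of_int p :: real)\<rfloor> = \<lfloor>of_int (int i * a) / (of_int p :: real)\<rfloor>"
    by simp
  then have "int i * a0 + \<lfloor>of_nat i * of_int a / (of_int p :: real)\<rfloor>
      = int i * (l div p) + (int i * a) div p"
    unfolding a0_def floor_divide_of_int_eq by simp
  moreover have "n_min p l a i = int i * (l div p) + (int i * a) div p
      + (if p - int i \<in> E_set p a then 1 else 0)"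
  proof (cases "i = 0")
    case True
    then show ?thesis by (simp add: n_min_def E_set_iff_mod[OF p0])
  next
    case False
    then show ?thesis
      using n_min_eq_E_set_indicator[OF assms(1,3)] assms(4) p0 unfolding a_def by simp
  qed
  ultimately show ?thesis by simp
qed

end
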